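(* Let $\mathcal{G}$ be a network of type $\mathcal{C}^1$ with exactly two stubborn agents $s_1,s_2$, neither of which has a self-loop ($w_{s_1s_1}=w_{s_2s_2}=0$), whose opinions evolve by the Friedkin–Johnsen model $\mathbf{x}(k+1)=(I-\beta)W\mathbf{x}(k)+\beta\mathbf{x}(0)$; let $m$ be a global communicator and let $\mathcal{T}_1,\dots,\mathcal{T}_4$ be defined relative to $m$. Suppose $s_1$ has a direct path to $s_2$. Let $(a,b,d)$ be a permissible non-redundant edge modification such that: node $a$ satisfies (i) $a\in\mathcal{T}_3$ and (ii) every simple path from $m$ to $a$ passes through $s_2$; node $d$ violates (i) or (ii) (or both); and $\beta_{s_2}\ge 1/2$. Then the modification increases the influence centrality $c_{s_2}$.
   Context: Let $\mathcal{G}=(\mathcal{V},\mathcal{E})$, $\mathcal{V}=\{1,\dots,n\}$, be a directed graph, where an edge $(i,j)$ means information flows from $i$ to $j$. Its weighted adjacency matrix $W=[w_{ij}]$ is row-stochastic with $w_{ij}>0$ iff $(j,i)\in\mathcal{E}$. In the Friedkin–Johnsen model, $\beta=\mathrm{diag}(\beta_1,\dots,\beta_n)$ with $\beta_i\in[0,1]$, and agent $i$ is stubborn if $\beta_i>0$. Here exactly two agents $s_1,s_2$ are stubborn, with $\beta_{s_1},\beta_{s_2}\in(0,1)$. The influence centrality vector is $\mathbf{c}=P^T\mathbb{1}_n/n$ with $P=(I_n-(I_n-\beta)W)^{-1}\beta$ (and $c_{s_1}+c_{s_2}=1$). "Increases the influence centrality of $s_2$" means $c_{s_2}$ is strictly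 larger after the modification. Type $\mathcal{C}^1$: $\mathcal{G}$ is strongly connected and some node $m$ belongs to every cycle of $\mathcal{G}$ other than self-loops; such an $m$ is a global communicator. The stubborn agents are labelled using the level decomposition relative to $m$: the nodes are partitioned into disjoint sets $\mathcal{L}_0^m=\{m\},\mathcal{L}_1^m,\dots,\mathcal{L}_q^m$ such that every node $j\in\mathcal{L}_z^m$ ($z\ge1$) has its in-neighbours (other than itself) only in $\{m\}\cup\mathcal{L}_1^m\cup\dots\cup\mathcal{L}_{z-1}^m$ and at least one in-neighbour in $\mathcal{L}_{z-1}^m$; $s_1\in\mathcal{L}_u^m$, $s_2\in\mathcal{L}_v^m$ with $u\le v$. A direct path from $i$ to $j$ is a path from $i$ to $j$ that does not pass through $m$. The nodes are classified as: $\mathcal{T}_1$: nodes having a direct path from $s_1$ but not from $s_2$; $\mathcal{T}_2$: direct path from $s_2$ but not from $s_1$; $\mathcal{T}_3$: direct paths from both; $\mathcal{T}_4$: from neither. By convention $s_1\in\mathcal{T}_1$, $m\in\mathcal{T}_3$, and when $s_1$ has a direct path to $s_2$, $s_2$ and every node with a direct path from $s_2$ belong to $\mathcal{T}_3$ (so $\mathcal{T}_2=\emptyset$). Edge modification $(a,b,d)$: for distinct nodes $a,b,d$ with $w_{bd}>0$ and some $0<w<w_{bd}$, replace $w_{ba}$ by $w_{ba}+w$ (adding edge $(a,b)$ if absent) and $w_{bd}$ by $w_{bd}-w$, so the row sum of $b$ is unchanged. It is permissible if the modified network is still of type $\mathcal{C}^1$; redundant if it changes the influence centrality of neither stubborn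 agent, non-redundant otherwise. *)

theory Defs
  imports "HOL-Analysis.Analysis"
begin

text \<open>Nodes are the elements of a finite type 'n; W $ i $ j is the weight w_ij.
  An edge (i,j) (information flows from i to j) exists iff w_ji > 0.\<close>

definition edge :: "real^'n^'n \<Rightarrow> 'n \<Rightarrow> 'n \<Rightarrow> bool" where
  "edge W i j \<longleftrightarrow> W $ j $ i > 0"

definition row_stochastic :: "real^'n^'n \<Rightarrow> bool" where
  "row_stochastic W \<longleftrightarrow> (\<forall>i j. W $ i $ j \<ge> 0) \<and> (\<forall>i. (\<Sum>j\<in>UNIV. W $ i $ j) = 1)"

definition is_walk :: "real^'n^'n \<Rightarrow> 'n list \<Rightarrow> bool" where
  "is_walk W xs \<longleftrightarrow> xs \<noteq> [] \<and> (\<forall>k. Suc k < length xs \<longrightarrow> edge W (xs ! k) (xs ! Suc k))"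

definition strongly_connected :: "real^'n^'n \<Rightarrow> bool" where
  "strongly_connected W \<longleftrightarrow> (\<forall>i j. (i, j) \<in> {(x, y). edge W x y}\<^sup>*)"

definition is_cycle :: "real^'n^'n \<Rightarrow> 'n list \<Rightarrow> bool" where
  "is_cycle W xs \<longleftrightarrow> is_walk W xs \<and> distinct xs \<and> length xs \<ge> 2 \<and> edge W (last xs) (hd xs)"

definition global_communicator :: "real^'n^'n \<Rightarrow> 'n \<Rightarrow> bool" where
  "global_communicator W m \<longleftrightarrow> (\<forall>xs. is_cycle W xs \<longrightarrow> m \<in> set xs)"

definition type_C1 :: "real^'n^'n \<Rightarrow> bool" where
  "type_C1 W \<longleftrightarrow> strongly_connected W \<and> (\<exists>m. global_communicator W m)"

text \<open>Level decomposition relative to m, encoded by the level index lev: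
  L_z = {j. lev j = z}, L_0 = {m}.\<close>
definition level_decomposition :: "real^'n^'n \<Rightarrow> 'n \<Rightarrow> ('n \<Rightarrow> nat) \<Rightarrow> bool" where
  "level_decomposition W m lev \<longleftrightarrow> lev m = 0 \<and>
     (\<forall>j. j \<noteq> m \<longrightarrow> lev j \<ge> 1 \<and>
        (\<forall>i. edge W i j \<and> i \<noteq> j \<longrightarrow> lev i < lev j) \<and>
        (\<exists>i. edge W i j \<and> i \<noteq> j \<and> lev i = lev j - 1))"

definition direct_path :: "real^'n^'n \<Rightarrow> 'n \<Rightarrow> 'n \<Rightarrow> 'n \<Rightarrow> bool" where
  "direct_path W m i j \<longleftrightarrow> (\<exists>xs. is_walk W xs \<and> length xs \<ge> 2 \<and> hd xs = i \<and> last xs = j \<and> m \<notin> set xs)"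

definition in_T3 :: "real^'n^'n \<Rightarrow> 'n \<Rightarrow> 'n \<Rightarrow> 'n \<Rightarrow> 'n \<Rightarrow> bool" where
  "in_T3 W m s1 s2 j \<longleftrightarrow>
     j = m \<or>
     (direct_path W m s1 s2 \<and> (j = s2 \<or> direct_path W m s2 j)) \<or>
     (j \<noteq> s1 \<and> direct_path W m s1 j \<and> direct_path W m s2 j)"

definition is_simple_path :: "real^'n^'n \<Rightarrow> 'n \<Rightarrow> 'n \<Rightarrow> 'n list \<Rightarrow> bool" where
  "is_simple_path W i j xs \<longleftrightarrow> is_walk W xs \<and> distinct xs \<and> hd xs = i \<and> last xs = j"

definition beta_mat :: "('n \<Rightarrow> real) \<Rightarrow> real^'n^'n" where
  "beta_mat \<beta> = (\<chi> i j. if i = j then \<beta> i else 0)"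

definition FJ_P :: "real^'n^'n \<Rightarrow> ('n \<Rightarrow> real) \<Rightarrow> real^'n^'n" where
  "FJ_P W \<beta> = matrix_inv (mat 1 - (mat 1 - beta_mat \<beta>) ** W) ** beta_mat \<beta>"

definition influence_centrality :: "real^'n^'n \<Rightarrow> ('n \<Rightarrow> real) \<Rightarrow> 'n \<Rightarrow> real" where
  "influence_centrality W \<beta> j = (\<Sum>i\<in>UNIV. FJ_P W \<beta> $ i $ j) / real CARD('n)"

definition edge_mod :: "real^'n^'n \<Rightarrow> 'n \<Rightarrow> 'n \<Rightarrow> 'n \<Rightarrow> real \<Rightarrow> real^'n^'n" where
  "edge_mod W a b d w = (\<chi> i j. if i = b \<and> j = a then W $ b $ a + w
                              else if i = b \<and> j = d then W $ b $ d - w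
                              else W $ i $ j)"

end

theory Submission
  imports Defs
begin

text \<open>Write \<open>M = I - (I - \<beta>) W\<close>, so that \<open>M P = \<beta>\<close>. On a strongly connected
  row-stochastic network with a stubborn agent, \<open>M\<close> obeys a minimum principle: if \<open>(M z)\<^sub>i \<ge> 0\<close>
  wherever \<open>z\<^sub>i < 0\<close>, then \<open>z \<ge> 0\<close>. Hence every column \<open>P\<^sub>\<cdot>\<^sub>j\<close> lies between \<open>0\<close> and
  \<open>P\<^sub>j\<^sub>j\<close>, and the column of \<open>s\<^sub>2\<close> equals its \<open>W\<close>-average at every non-stubborn node. Going up
  the level decomposition, it is therefore constant, equal to its maximum \<open>P\<^sub>s\<^sub>2\<^sub>s\<^sub>2\<close>, on the
  nodes all of whose simple paths from \<open>m\<close> pass through \<open>s\<^sub>2\<close>; in particular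
  \<open>P\<^sub>a\<^sub>s\<^sub>2 \<ge> P\<^sub>d\<^sub>s\<^sub>2\<close>.

  The modification only changes row \<open>b\<close> of \<open>M\<close>, and
  \<open>M' (P'\<^sub>\<cdot>\<^sub>j - P\<^sub>\<cdot>\<^sub>j) = (1 - \<beta>\<^sub>b) w (P\<^sub>a\<^sub>j - P\<^sub>d\<^sub>j) e\<^sub>b\<close>. By the minimum principle for
  \<open>M'\<close> the column of \<open>s\<^sub>2\<close> increases, strictly unless \<open>P\<^sub>a\<^sub>s\<^sub>2 = P\<^sub>d\<^sub>s\<^sub>2\<close>; but then also
  \<open>P\<^sub>a\<^sub>s\<^sub>1 = P\<^sub>d\<^sub>s\<^sub>1\<close> (rows of \<open>P\<close> sum to one), both columns are unchanged, and the
  modification would be redundant. The argument does not need \<open>\<beta>\<^sub>s\<^sub>2 \<ge> 1/2\<close>, the condition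
  on \<open>d\<close>, \<open>a \<in> T\<^sub>3\<close>, the absence of self-loops or the global communicator.\<close>

definition FJ_op :: "real^'n^'n \<Rightarrow> ('n \<Rightarrow> real) \<Rightarrow> ('n \<Rightarrow> real) \<Rightarrow> 'n \<Rightarrow> real" where
  "FJ_op W \<beta> z i = z i - (1 - \<beta> i) * (\<Sum>j\<in>UNIV. W $ i $ j * z j)"

abbreviation FJ_matrix :: "real^'n^'n \<Rightarrow> ('n \<Rightarrow> real) \<Rightarrow> real^'n^'n" where
  "FJ_matrix W \<beta> \<equiv> mat 1 - (mat 1 - beta_mat \<beta>) ** W"

lemma FJ_matrix_entry:
  "FJ_matrix W \<beta> $ i $ j = (if i = j then 1 else 0) - (1 - \<beta> i) * W $ i $ j"
proof -
  have "((mat 1 - beta_mat \<beta>) ** W) $ i $ j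
      = (\<Sum>k\<in>UNIV. if i = k then (1 - \<beta> i) * W $ k $ j else 0)"
    unfolding matrix_matrix_mult_def vec_lambda_beta
    by (rule sum.cong) (auto simp: mat_def beta_mat_def)
  then show ?thesis by (simp add: mat_def)
qed

lemma FJ_matrix_mult_entry:
  fixes X :: "real^'m^'n"
  shows "(FJ_matrix W \<beta> ** X) $ i $ j = FJ_op W \<beta> (\<lambda>k. X $ k $ j) i"
proof -
  have entry: "(M ** X) $ i $ j = (\<Sum>k\<in>UNIV. M $ i $ k * X $ k $ j)" for M :: "real^'n^'n"
    by (simp add: matrix_matrix_mult_def)
  have "(FJ_matrix W \<beta> ** X) $ i $ j
      = (\<Sum>k\<in>UNIV. (if i = k then X $ k $ j else 0) - (1 - \<beta> i) * (W $ i $ k * X $ k $ j))"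
    unfolding entry[of "FJ_matrix W \<beta>"] FJ_matrix_entry
    by (rule sum.cong) (auto simp: left_diff_distrib)
  then show ?thesis by (simp add: FJ_op_def sum_subtractf sum_distrib_left)
qed

lemma FJ_matrix_vector_mult_entry: "(FJ_matrix W \<beta> *v x) $ i = FJ_op W \<beta> (\<lambda>k. x $ k) i"
proof -
  have "(FJ_matrix W \<beta> *v x) $ i
      = (\<Sum>k\<in>UNIV. (if i = k then x $ k else 0) - (1 - \<beta> i) * (W $ i $ k * x $ k))"
    unfolding matrix_vector_mult_def vec_lambda_beta FJ_matrix_entry
    by (rule sum.cong) (auto simp: left_diff_distrib)
  then show ?thesis by (simp add: FJ_op_def sum_subtractf sum_distrib_left)
qed

lemma FJ_op_diff: "FJ_op W \<beta> (\<lambda>k. x k - y k) i = FJ_op W \<beta> x i - FJ_op W \<beta> y i"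
  by (simp add: FJ_op_def sum_subtractf algebra_simps)

lemma FJ_op_uminus: "FJ_op W \<beta> (\<lambda>k. - x k) i = - FJ_op W \<beta> x i"
  by (simp add: FJ_op_def sum_negf algebra_simps)

lemma FJ_op_sum: "FJ_op W \<beta> (\<lambda>k. \<Sum>j\<in>A. X k j) i = (\<Sum>j\<in>A. FJ_op W \<beta> (\<lambda>k. X k j) i)"
  by (simp add: FJ_op_def sum_subtractf sum_distrib_left sum.swap[of _ A])

lemma FJ_op_const: "row_stochastic W \<Longrightarrow> FJ_op W \<beta> (\<lambda>k. c) i = \<beta> i * c"
  by (simp add: FJ_op_def row_stochastic_def flip: sum_distrib_right) (simp add: algebra_simps)

lemma FJ_op_edge_mod:
  assumes "a \<noteq> d"
  shows "FJ_op (edge_mod W a b d w) \<beta> x i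
       = FJ_op W \<beta> x i - (if i = b then (1 - \<beta> b) * w * (x a - x d) else 0)"
proof (cases "i = b")
  case True
  have "(\<Sum>j\<in>UNIV. edge_mod W a b d w $ i $ j * x j)
      = (\<Sum>j\<in>UNIV. W $ i $ j * x j + ((if j = a then w * x a else 0) - (if j = d then w * x d else 0)))"
    by (rule sum.cong) (use True assms in \<open>auto simp: edge_mod_def algebra_simps\<close>)
  also have "\<dots> = (\<Sum>j\<in>UNIV. W $ i $ j * x j) + w * (x a - x d)"
    by (simp add: sum.distrib sum_subtractf algebra_simps)
  finally have sum_eq: "(\<Sum>j\<in>UNIV. edge_mod W a b d w $ i $ j * x j)
      = (\<Sum>j\<in>UNIV. W $ i $ j * x j) + w * (x a - x d)" .
  show ?thesis using True unfolding FJ_op_def sum_eq by (simp add: algebra_simps)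
qed (simp add: FJ_op_def edge_mod_def)

lemma row_stochastic_edge_mod:
  assumes W: "row_stochastic W" and "a \<noteq> d" and "0 < w" "w < W $ b $ d"
  shows "row_stochastic (edge_mod W a b d w)"
  unfolding row_stochastic_def
proof (intro conjI allI)
  show "0 \<le> edge_mod W a b d w $ i $ j" for i j
    using W assms(3,4) by (auto simp: edge_mod_def row_stochastic_def)
  show "(\<Sum>j\<in>UNIV. edge_mod W a b d w $ i $ j) = 1" for i
  proof (cases "i = b")
    case True
    have "(\<Sum>j\<in>UNIV. edge_mod W a b d w $ i $ j)
        = (\<Sum>j\<in>UNIV. W $ i $ j + ((if j = a then w else 0) - (if j = d then w else 0)))"
      by (rule sum.cong) (use True assms(2) in \<open>auto simp: edge_mod_def\<close>)
    then show ?thesis using W by (simp add: sum.distrib sum_subtractf row_stochastic_def)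
  qed (use W in \<open>simp add: edge_mod_def row_stochastic_def\<close>)
qed

lemma FJ_P_eq_0: "\<beta> j = 0 \<Longrightarrow> FJ_P W \<beta> $ i $ j = 0"
  by (simp add: FJ_P_def matrix_matrix_mult_def beta_mat_def if_distrib cong: if_cong)

lemma influence_centrality_diff:
  fixes W W' :: "real^'n^'n"
  shows "influence_centrality W' \<beta> j - influence_centrality W \<beta> j
     = (\<Sum>i\<in>UNIV. FJ_P W' \<beta> $ i $ j - FJ_P W \<beta> $ i $ j) / real CARD('n)"
  by (simp add: influence_centrality_def sum_subtractf diff_divide_distrib)

locale fj_network =
  fixes W :: "real^'n^'n" and \<beta> :: "'n \<Rightarrow> real"
  assumes row_stochastic: "row_stochastic W"
    and strongly_connected: "strongly_connected W"
    and beta_nonneg: "0 \<le> \<beta> i" and beta_le_1: "\<beta> i \<le> 1"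
    and stubborn_exists: "\<exists>s. 0 < \<beta> s"
begin

lemma FJ_op_at_negative_min:
  assumes min: "\<And>x. z y \<le> z x" and neg: "z y < 0" and op: "0 \<le> FJ_op W \<beta> z y"
  shows "\<beta> y = 0" and "0 < W $ y $ x \<Longrightarrow> z x = z y"
proof -
  define S where "S = (\<Sum>l\<in>UNIV. W $ y $ l * (z l - z y))"
  have terms_nonneg: "0 \<le> W $ y $ l * (z l - z y)" for l
    using row_stochastic min by (simp add: row_stochastic_def)
  then have "0 \<le> S" by (simp add: S_def sum_nonneg)
  have "(\<Sum>l\<in>UNIV. W $ y $ l * z l) = z y + S"
    using row_stochastic
    by (simp add: S_def row_stochastic_def right_diff_distrib sum_subtractf flip: sum_distrib_right)
  then have "0 \<le> \<beta> y * z y - (1 - \<beta> y) * S"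
    using op by (simp add: FJ_op_def algebra_simps)
  moreover have "\<beta> y * z y \<le> 0" "0 \<le> (1 - \<beta> y) * S"
    using neg \<open>0 \<le> S\<close> beta_nonneg[of y] beta_le_1[of y] by (simp_all add: mult_nonneg_nonpos)
  ultimately have "\<beta> y * z y = 0" "(1 - \<beta> y) * S = 0" by linarith+
  then show "\<beta> y = 0" using neg by simp
  with \<open>(1 - \<beta> y) * S = 0\<close> have "S = 0" by simp
  then have "W $ y $ x * (z x - z y) = 0"
    using terms_nonneg sum_nonneg_eq_0_iff[of UNIV "\<lambda>l. W $ y $ l * (z l - z y)"]
    by (simp add: S_def)
  then show "0 < W $ y $ x \<Longrightarrow> z x = z y" by simp
qed

text \<open>Minimum principle: a negative minimum of \<open>z\<close> spreads backwards along edges and, by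
  strong connectivity, reaches a stubborn agent, where it is impossible.\<close>
lemma nonneg_if_FJ_op_nonneg:
  assumes op: "\<And>i. z i < 0 \<Longrightarrow> 0 \<le> FJ_op W \<beta> z i"
  shows "0 \<le> z i"
proof (rule ccontr)
  assume "\<not> 0 \<le> z i"
  have "Min (range z) \<in> range z" by (rule Min_in) simp_all
  then obtain k where k: "Min (range z) = z k" by blast
  have min: "z k \<le> z x" for x unfolding k[symmetric] by (rule Min_le) simp_all
  have neg: "z k < 0" using min[of i] \<open>\<not> 0 \<le> z i\<close> by linarith
  have at_min: "\<beta> y = 0 \<and> (\<forall>x. 0 < W $ y $ x \<longrightarrow> z x = z k)" if "z y = z k" for y
  proof -
    have "z y \<le> z x" for x using min[of x] that by linarith
    moreover have "z y < 0" using neg that by linarith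
    moreover from this have "0 \<le> FJ_op W \<beta> z y" by (rule op)
    ultimately show ?thesis using FJ_op_at_negative_min[of z y] that by metis
  qed
  obtain s where s: "0 < \<beta> s" using stubborn_exists by blast
  have "(s, k) \<in> {(x, y). edge W x y}\<^sup>*"
    using strongly_connected by (simp add: strongly_connected_def)
  then have "z s = z k"
  proof (induction rule: converse_rtrancl_induct)
    case (step x y)
    then show ?case using at_min[OF step.IH] by (simp add: edge_def)
  qed simp
  from at_min[OF this] s show False by simp
qed

lemma eq_0_if_FJ_op_eq_0:
  assumes "\<And>i. FJ_op W \<beta> z i = 0"
  shows "z i = 0"
  using nonneg_if_FJ_op_nonneg[of z i] nonneg_if_FJ_op_nonneg[of "\<lambda>k. - z k" i] assms
  by (simp add: FJ_op_uminus)

lemma invertible_FJ_matrix: "invertible (FJ_matrix W \<beta>)"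
proof -
  have "x = 0" if "FJ_matrix W \<beta> *v x = 0" for x
  proof -
    have "FJ_op W \<beta> (\<lambda>k. x $ k) i = 0" for i
      using that by (metis FJ_matrix_vector_mult_entry zero_index)
    then show ?thesis using eq_0_if_FJ_op_eq_0 by (simp add: vec_eq_iff)
  qed
  then show ?thesis
    using matrix_left_invertible_ker invertible_left_inverse by blast
qed

lemma FJ_op_FJ_P: "FJ_op W \<beta> (\<lambda>k. FJ_P W \<beta> $ k $ j) i = (if i = j then \<beta> i else 0)"
proof -
  have "\<exists>A. FJ_matrix W \<beta> ** A = mat 1 \<and> A ** FJ_matrix W \<beta> = mat 1"
    using invertible_FJ_matrix by (simp add: invertible_def)
  then have "FJ_matrix W \<beta> ** matrix_inv (FJ_matrix W \<beta>) = mat 1"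
    unfolding matrix_inv_def by (rule someI2_ex) blast
  then have "FJ_matrix W \<beta> ** FJ_P W \<beta> = beta_mat \<beta>"
    unfolding FJ_P_def matrix_mul_assoc by (simp only: matrix_mul_lid)
  then have "(FJ_matrix W \<beta> ** FJ_P W \<beta>) $ i $ j = beta_mat \<beta> $ i $ j" by simp
  then show ?thesis by (simp only: FJ_matrix_mult_entry) (simp add: beta_mat_def)
qed

lemma FJ_P_row_sum: "(\<Sum>j\<in>UNIV. FJ_P W \<beta> $ i $ j) = 1"
proof -
  have "FJ_op W \<beta> (\<lambda>k. (\<Sum>j\<in>UNIV. FJ_P W \<beta> $ k $ j) - 1) i = 0" for i
    unfolding FJ_op_diff FJ_op_sum FJ_op_const[OF row_stochastic] FJ_op_FJ_P by simp
  then show ?thesis using eq_0_if_FJ_op_eq_0[of "\<lambda>k. (\<Sum>j\<in>UNIV. FJ_P W \<beta> $ k $ j) - 1"] by simp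
qed

lemma FJ_P_nonneg: "0 \<le> FJ_P W \<beta> $ i $ j"
  by (rule nonneg_if_FJ_op_nonneg) (simp add: FJ_op_FJ_P beta_nonneg)

lemma FJ_P_le_diag: "FJ_P W \<beta> $ i $ j \<le> FJ_P W \<beta> $ j $ j"
proof -
  have "0 \<le> FJ_P W \<beta> $ j $ j - FJ_P W \<beta> $ i $ j"
  proof (rule nonneg_if_FJ_op_nonneg[of "\<lambda>k. FJ_P W \<beta> $ j $ j - FJ_P W \<beta> $ k $ j"])
    fix l assume "FJ_P W \<beta> $ j $ j - FJ_P W \<beta> $ l $ j < 0"
    then have "l \<noteq> j" by auto
    then show "0 \<le> FJ_op W \<beta> (\<lambda>k. FJ_P W \<beta> $ j $ j - FJ_P W \<beta> $ k $ j) l"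
      unfolding FJ_op_diff FJ_op_const[OF row_stochastic] FJ_op_FJ_P
      by (simp add: beta_nonneg FJ_P_nonneg)
  qed
  then show ?thesis by simp
qed

lemma FJ_P_harmonic:
  "\<beta> x = 0 \<Longrightarrow> x \<noteq> j \<Longrightarrow> FJ_P W \<beta> $ x $ j = (\<Sum>k\<in>UNIV. W $ x $ k * FJ_P W \<beta> $ k $ j)"
  using FJ_op_FJ_P[of j x] by (simp add: FJ_op_def)

lemma FJ_P_two_stubborn_row_sum:
  assumes stubborn: "\<And>j. 0 < \<beta> j \<Longrightarrow> j = s1 \<or> j = s2" and "s1 \<noteq> s2"
  shows "FJ_P W \<beta> $ i $ s1 + FJ_P W \<beta> $ i $ s2 = 1"
proof -
  have "FJ_P W \<beta> $ i $ j = 0" if "j \<notin> {s1, s2}" for j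
  proof (rule FJ_P_eq_0)
    show "\<beta> j = 0" using that stubborn[of j] beta_nonneg[of j] by force
  qed
  then have "(\<Sum>j\<in>{s1, s2}. FJ_P W \<beta> $ i $ j) = (\<Sum>j\<in>UNIV. FJ_P W \<beta> $ i $ j)"
    by (intro sum.mono_neutral_left) auto
  then show ?thesis using FJ_P_row_sum \<open>s1 \<noteq> s2\<close> by simp
qed

lemma FJ_op_edge_mod_FJ_P_diff:
  assumes W': "fj_network (edge_mod W a b d w) \<beta>" and "a \<noteq> d"
  shows "FJ_op (edge_mod W a b d w) \<beta>
           (\<lambda>k. FJ_P (edge_mod W a b d w) \<beta> $ k $ j - FJ_P W \<beta> $ k $ j) i
       = (if i = b then (1 - \<beta> b) * w * (FJ_P W \<beta> $ a $ j - FJ_P W \<beta> $ d $ j) else 0)"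
proof -
  interpret W': fj_network "edge_mod W a b d w" \<beta> by (rule W')
  have "FJ_op (edge_mod W a b d w) \<beta> (\<lambda>k. FJ_P W \<beta> $ k $ j) i
      = (if i = j then \<beta> i else 0) - (if i = b then (1 - \<beta> b) * w * (FJ_P W \<beta> $ a $ j - FJ_P W \<beta> $ d $ j) else 0)"
    by (simp only: FJ_op_edge_mod[OF \<open>a \<noteq> d\<close>] FJ_op_FJ_P)
  then show ?thesis by (simp only: FJ_op_diff W'.FJ_op_FJ_P)
qed

lemma influence_centrality_edge_mod_eq:
  assumes W': "fj_network (edge_mod W a b d w) \<beta>" and "a \<noteq> d"
    and eq: "FJ_P W \<beta> $ a $ j = FJ_P W \<beta> $ d $ j"
  shows "influence_centrality (edge_mod W a b d w) \<beta> j = influence_centrality W \<beta> j"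
proof -
  interpret W': fj_network "edge_mod W a b d w" \<beta> by (rule W')
  have "FJ_P (edge_mod W a b d w) \<beta> $ i $ j - FJ_P W \<beta> $ i $ j = 0" for i
    by (rule W'.eq_0_if_FJ_op_eq_0)
      (simp add: FJ_op_edge_mod_FJ_P_diff[OF W' \<open>a \<noteq> d\<close>] eq)
  then show ?thesis using influence_centrality_diff[of "edge_mod W a b d w" \<beta> j W] by simp
qed

lemma influence_centrality_edge_mod_less:
  assumes W': "fj_network (edge_mod W a b d w) \<beta>" and "a \<noteq> d" and "0 < w" and "\<beta> b < 1"
    and less: "FJ_P W \<beta> $ d $ j < FJ_P W \<beta> $ a $ j"
  shows "influence_centrality W \<beta> j < influence_centrality (edge_mod W a b d w) \<beta> j"
proof -
  interpret W': fj_network "edge_mod W a b d w" \<beta> by (rule W')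
  define D where "D k = FJ_P (edge_mod W a b d w) \<beta> $ k $ j - FJ_P W \<beta> $ k $ j" for k
  have op_D: "FJ_op (edge_mod W a b d w) \<beta> D i
      = (if i = b then (1 - \<beta> b) * w * (FJ_P W \<beta> $ a $ j - FJ_P W \<beta> $ d $ j) else 0)" for i
    unfolding D_def by (rule FJ_op_edge_mod_FJ_P_diff[OF W' \<open>a \<noteq> d\<close>])
  have op_D_b: "0 < FJ_op (edge_mod W a b d w) \<beta> D b"
    using op_D[of b] assms(3,4) less by simp
  have D_nonneg: "0 \<le> D i" for i
    by (rule W'.nonneg_if_FJ_op_nonneg) (use op_D op_D_b in \<open>auto simp: less_imp_le\<close>)
  have "D \<noteq> (\<lambda>_. 0)" using op_D_b by (auto simp: FJ_op_def)
  then obtain l where "D l \<noteq> 0" by auto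
  with D_nonneg have "0 < D l" by (simp add: order_less_le)
  then have "0 < (\<Sum>i\<in>UNIV. D i) / real CARD('n)" using D_nonneg by (intro divide_pos_pos sum_pos2) auto
  then show ?thesis
    using influence_centrality_diff[of "edge_mod W a b d w" \<beta> j W] by (simp add: D_def)
qed

end

lemma is_walk_snoc:
  assumes walk: "is_walk W xs" and "edge W (last xs) x"
  shows "is_walk W (xs @ [x])"
  unfolding is_walk_def
proof (intro conjI allI impI)
  fix k assume k: "Suc k < length (xs @ [x])"
  have "xs \<noteq> []" using walk by (simp add: is_walk_def)
  show "edge W ((xs @ [x]) ! k) ((xs @ [x]) ! Suc k)"
  proof (cases "Suc k < length xs")
    case True
    then show ?thesis using walk by (simp add: nth_append is_walk_def)
  next
    case False
    then have "k = length xs - 1" using k by simp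
    then show ?thesis
      using \<open>edge W (last xs) x\<close> \<open>xs \<noteq> []\<close> by (simp add: nth_append last_conv_nth)
  qed
qed simp

lemma is_simple_path_take:
  assumes "is_simple_path W m y xs" and "k < length xs"
  shows "is_simple_path W m (xs ! k) (take (Suc k) xs)"
proof -
  have "take (Suc k) xs \<noteq> []" "xs \<noteq> []" using assms(2) by auto
  then have "last (take (Suc k) xs) = xs ! k" using assms(2) by (simp add: last_conv_nth)
  moreover have "is_walk W (take (Suc k) xs)"
    using assms(1) \<open>take (Suc k) xs \<noteq> []\<close> by (auto simp: is_simple_path_def is_walk_def)
  ultimately show ?thesis using assms(1) \<open>xs \<noteq> []\<close> by (simp add: is_simple_path_def hd_take)
qed

definition dominates :: "real^'n^'n \<Rightarrow> 'n \<Rightarrow> 'n \<Rightarrow> 'n \<Rightarrow> bool" where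
  "dominates W m s x \<longleftrightarrow> (\<forall>xs. is_simple_path W m x xs \<longrightarrow> s \<in> set xs)"

lemma dominates_root: "dominates W m s m \<Longrightarrow> s = m"
  by (auto simp: dominates_def is_simple_path_def is_walk_def dest: spec[of _ "[m]"])

lemma dominates_in_neighbour:
  assumes dom: "dominates W m s x" and "x \<noteq> s" and "edge W j x"
  shows "dominates W m s j"
  unfolding dominates_def
proof (intro allI impI)
  fix ys assume ys: "is_simple_path W m j ys"
  show "s \<in> set ys"
  proof (cases "x \<in> set ys")
    case True
    then obtain k where k: "k < length ys" "ys ! k = x" by (metis in_set_conv_nth)
    then have "s \<in> set (take (Suc k) ys)"
      using dom is_simple_path_take[OF ys k(1)] by (auto simp: dominates_def)
    then show ?thesis by (meson in_set_takeD)
  next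
    case False
    then have "is_simple_path W m x (ys @ [x])"
      using ys \<open>edge W j x\<close> is_walk_snoc[of W ys x]
      by (auto simp: is_simple_path_def is_walk_def)
    then show ?thesis using dom \<open>x \<noteq> s\<close> by (auto simp: dominates_def)
  qed
qed

lemma level_simple_path:
  assumes lev: "level_decomposition W m lev"
  shows "\<exists>xs. is_simple_path W m x xs \<and> length xs = Suc (lev x) \<and> (\<forall>k<length xs. lev (xs ! k) = k)"
proof (induction "lev x" arbitrary: x rule: less_induct)
  case less
  show ?case
  proof (cases "x = m")
    case True
    then show ?thesis using lev
      by (intro exI[of _ "[m]"]) (auto simp: is_simple_path_def is_walk_def level_decomposition_def)
  next
    case False
    then obtain i where i: "edge W i x" "lev i = lev x - 1" and "1 \<le> lev x"
      using lev by (auto simp: level_decomposition_def)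
    then obtain xs where xs: "is_simple_path W m i xs" "length xs = Suc (lev i)"
      "\<forall>k<length xs. lev (xs ! k) = k"
      using less by (metis diff_less zero_less_one order_less_le_trans)
    then have "x \<notin> set xs" using \<open>1 \<le> lev x\<close> i(2) by (auto simp: in_set_conv_nth)
    then have "is_simple_path W m x (xs @ [x])"
      using xs(1) i(1) is_walk_snoc[of W xs x]
      by (auto simp: is_simple_path_def is_walk_def)
    moreover have "\<forall>k<length (xs @ [x]). lev ((xs @ [x]) ! k) = k"
      using xs(2,3) i(2) \<open>1 \<le> lev x\<close> by (auto simp: nth_append less_Suc_eq)
    ultimately show ?thesis using xs(2) i(2) \<open>1 \<le> lev x\<close> by auto
  qed
qed

lemma not_dominates_if_level_le:
  assumes lev: "level_decomposition W m lev" and "lev x \<le> lev s" and "x \<noteq> s"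
  shows "\<not> dominates W m s x"
proof
  assume "dominates W m s x"
  obtain xs where xs: "is_simple_path W m x xs" "length xs = Suc (lev x)"
    "\<forall>k<length xs. lev (xs ! k) = k"
    using level_simple_path[OF lev] by blast
  with \<open>dominates W m s x\<close> obtain k where "k < length xs" "xs ! k = s"
    by (auto simp: dominates_def in_set_conv_nth)
  then have "k = lev x" using xs(2,3) \<open>lev x \<le> lev s\<close> by auto
  then have "xs ! k = last xs"
    using xs(2) by (metis diff_Suc_1 last_conv_nth list.size(3) nat.distinct(1))
  then show False using \<open>xs ! k = s\<close> \<open>x \<noteq> s\<close> xs(1) by (simp add: is_simple_path_def)
qed

lemma row_stochastic_diag_less_1:
  assumes W: "row_stochastic W" and "edge W i x" and "i \<noteq> x"
  shows "W $ x $ x < 1"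
proof -
  have "(\<Sum>j\<in>{x, i}. W $ x $ j) \<le> (\<Sum>j\<in>UNIV. W $ x $ j)"
    using W by (intro sum_mono2) (auto simp: row_stochastic_def)
  then show ?thesis using W assms(2,3) by (simp add: row_stochastic_def edge_def)
qed

lemma row_stochastic_average_eq:
  assumes W: "row_stochastic W" and "W $ x $ x < 1" and avg: "f x = (\<Sum>j\<in>UNIV. W $ x $ j * f j)"
    and nbrs: "\<And>j. j \<noteq> x \<Longrightarrow> 0 < W $ x $ j \<Longrightarrow> f j = c"
  shows "f x = c"
proof -
  have term_eq: "W $ x $ j * f j = W $ x $ j * c + (if j = x then W $ x $ x * (f x - c) else 0)" for j
  proof (cases "j = x")
    case False
    have "0 \<le> W $ x $ j" using W by (simp add: row_stochastic_def)
    then show ?thesis using nbrs[of j] False by (cases "0 < W $ x $ j") auto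
  qed (simp add: algebra_simps)
  have "f x = (\<Sum>j\<in>UNIV. W $ x $ j * f j)" by (rule avg)
  also have "\<dots> = (\<Sum>j\<in>UNIV. W $ x $ j) * c + W $ x $ x * (f x - c)"
    unfolding term_eq sum.distrib sum_distrib_right by simp
  also have "\<dots> = c + W $ x $ x * (f x - c)"
    using W by (simp add: row_stochastic_def)
  finally have "f x = c + W $ x $ x * (f x - c)" .
  moreover have "(1 - W $ x $ x) * (f x - c) = f x - c - W $ x $ x * (f x - c)"
    by (simp add: algebra_simps)
  ultimately have "(1 - W $ x $ x) * (f x - c) = 0" by linarith
  then show ?thesis using \<open>W $ x $ x < 1\<close> by simp
qed

lemma dominated_harmonic_eq:
  assumes W: "row_stochastic W" and lev: "level_decomposition W m lev"
    and harmonic: "\<And>x. x \<noteq> s \<Longrightarrow> dominates W m s x \<Longrightarrow> f x = (\<Sum>j\<in>UNIV. W $ x $ j * f j)"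
  shows "dominates W m s x \<Longrightarrow> f x = f s"
proof (induction "lev x" arbitrary: x rule: less_induct)
  case less
  show ?case
  proof (cases "x = s")
    case False
    then have "x \<noteq> m" using less.prems dominates_root by blast
    then obtain i where "edge W i x" "i \<noteq> x"
      using lev by (auto simp: level_decomposition_def)
    show ?thesis
    proof (rule row_stochastic_average_eq[OF W])
      show "W $ x $ x < 1" by (rule row_stochastic_diag_less_1) fact+
      show "f x = (\<Sum>j\<in>UNIV. W $ x $ j * f j)" using harmonic False less.prems .
      fix j assume "j \<noteq> x" "0 < W $ x $ j"
      then have "edge W j x" by (simp add: edge_def)
      then have "lev j < lev x" using lev \<open>x \<noteq> m\<close> \<open>j \<noteq> x\<close> by (simp add: level_decomposition_def)
      moreover have "dominates W m s j" by (rule dominates_in_neighbour) fact+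
      ultimately show "f j = f s" using less.hyps by blast
    qed
  qed simp
qed

theorem corollary1:
  fixes W :: "real^'n^'n" and \<beta> :: "'n \<Rightarrow> real"
    and s1 s2 m a b d :: 'n and w :: real and lev :: "'n \<Rightarrow> nat"
  assumes stoch: "row_stochastic W"
    and C1: "type_C1 W"
    and gc: "global_communicator W m"
    and levels: "level_decomposition W m lev" and label: "lev s1 \<le> lev s2"
    and beta_range: "\<forall>i. 0 \<le> \<beta> i \<and> \<beta> i \<le> 1"
    and s12: "s1 \<noteq> s2"
    and stubborn: "\<forall>i. \<beta> i > 0 \<longleftrightarrow> i = s1 \<or> i = s2"
    and beta_lt1: "\<beta> s1 < 1" "\<beta> s2 < 1"
    and noloop: "W $ s1 $ s1 = 0" "W $ s2 $ s2 = 0"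
    and dp: "direct_path W m s1 s2"
    and distinct: "a \<noteq> b" "b \<noteq> d" "a \<noteq> d"
    and w_pos: "0 < w" and w_lt: "w < W $ b $ d"
    and permissible: "type_C1 (edge_mod W a b d w)"
    and nonredundant: "influence_centrality (edge_mod W a b d w) \<beta> s1 \<noteq> influence_centrality W \<beta> s1
                     \<or> influence_centrality (edge_mod W a b d w) \<beta> s2 \<noteq> influence_centrality W \<beta> s2"
    and a_i: "in_T3 W m s1 s2 a"
    and a_ii: "\<forall>xs. is_simple_path W m a xs \<longrightarrow> s2 \<in> set xs"
    and d_viol: "\<not> (in_T3 W m s1 s2 d \<and> (\<forall>xs. is_simple_path W m d xs \<longrightarrow> s2 \<in> set xs))"
    and beta_half: "\<beta> s2 \<ge> 1/2"
  shows "influence_centrality (edge_mod W a b d w) \<beta> s2 > influence_centrality W \<beta> s2"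
proof -
  interpret fj_network W \<beta>
    using stoch C1 beta_range stubborn by unfold_locales (auto simp: type_C1_def)
  have W': "fj_network (edge_mod W a b d w) \<beta>"
    using row_stochastic_edge_mod[OF stoch distinct(3) w_pos w_lt] permissible beta_range stubborn
    by unfold_locales (auto simp: type_C1_def)
  have only_s12: "\<And>j. 0 < \<beta> j \<Longrightarrow> j = s1 \<or> j = s2" using stubborn by blast
  have "\<beta> b < 1" using stubborn beta_lt1 beta_range[rule_format, of b] by force
  have "FJ_P W \<beta> $ a $ s2 = FJ_P W \<beta> $ s2 $ s2"
  proof (rule dominated_harmonic_eq[OF stoch levels])
    show "dominates W m s2 a" using a_ii by (simp add: dominates_def)
    fix x assume "x \<noteq> s2" "dominates W m s2 x"
    then have "x \<noteq> s1" using not_dominates_if_level_le[OF levels label s12] by blast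
    with \<open>x \<noteq> s2\<close> have "\<beta> x = 0" using stubborn beta_range[rule_format, of x] by force
    then show "FJ_P W \<beta> $ x $ s2 = (\<Sum>j\<in>UNIV. W $ x $ j * FJ_P W \<beta> $ j $ s2)"
      using FJ_P_harmonic \<open>x \<noteq> s2\<close> by blast
  qed
  then have "FJ_P W \<beta> $ d $ s2 \<le> FJ_P W \<beta> $ a $ s2" using FJ_P_le_diag by simp
  moreover have "FJ_P W \<beta> $ d $ s2 \<noteq> FJ_P W \<beta> $ a $ s2"
  proof
    assume eq_s2: "FJ_P W \<beta> $ d $ s2 = FJ_P W \<beta> $ a $ s2"
    then have eq_s1: "FJ_P W \<beta> $ a $ s1 = FJ_P W \<beta> $ d $ s1"
      using FJ_P_two_stubborn_row_sum[OF only_s12 s12, of a]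
        FJ_P_two_stubborn_row_sum[OF only_s12 s12, of d] by linarith
    show False
      using nonredundant eq_s1 eq_s2
        influence_centrality_edge_mod_eq[OF W' distinct(3)] by metis
  qed
  ultimately show ?thesis
    using influence_centrality_edge_mod_less[OF W' distinct(3) w_pos \<open>\<beta> b < 1\<close>] by simp
qed

end
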